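(* Let $r\ge1$, $\mu\in\mathcal P_r$, $n\in\mathbb N$ and $\mathbf p\in\Pi_n$, with $P_i=\sum_{j=1}^ip_j$ ($P_0=0$). Then there exists $\mathbf x\in\Xi_n$ minimizing $\mathbf y\mapsto d_r(\delta^{\mathbf p}_{\mathbf y},\mu)$ over $\Xi_n$. Moreover: (a) For $r=1$: $\mathbf x\in\Xi_n$ is such a minimizer if and only if, for every $i=1,\dots,n$, $P_{i-1}<P_i$ implies $x_i\in Q^{F_\mu}_{(P_{i-1}+P_i)/2}$. (b) For $r>1$: $\mathbf x\in\Xi_n$ is such a minimizer if and only if, for every $i=1,\dots,n$, $P_{i-1}<P_i$ implies $x_i=\tau_r^{f_i}$, where $f_i$ is the restriction of $F_\mu^{-1}$ to $[P_{i-1},P_i]$.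
   Context: $\mathcal P$ denotes the set of Borel probability measures on $\mathbb R$; $\mathcal P_r=\{\mu\in\mathcal P:\int|x|^r{\rm d}\mu(x)<\infty\}$. For $\mu\in\mathcal P$, $F_\mu(x)=\mu(]-\infty,x])$ and $F_\mu^{-1}(t)=\sup\{x: F_\mu(x)\le t\}$, $t\in]0,1[$. $d_r(\mu,\nu)=\big(\int_0^1|F_\mu^{-1}(t)-F_\nu^{-1}(t)|^r{\rm d}t\big)^{1/r}$. $\Xi_n=\{\mathbf x\in\mathbb R^n:x_1\le\dots\le x_n\}$, $\Pi_n=\{\mathbf p\in\mathbb R^n:p_i\ge0,\sum_ip_i=1\}$, $\delta^{\mathbf p}_{\mathbf x}=\sum_ip_i\delta_{x_i}$. For $s\in]0,1[$, $Q^{F_\mu}_s=[\inf\{x\in\mathbb R:F_\mu(x)\ge s\},\ \sup\{x\in\mathbb R:F_\mu(x)\le s\}]$ (the set of $s$-quantiles of $\mu$). For a bounded non-degenerate interval $J$ and $f\in L^r(J)$ with $r>1$, $\tau_r^f$ denotes the unique real number minimizing $t\mapsto\|f-t\|_{L^r(J)}$. *)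

theory Defs
  imports "HOL-Probability.Probability"
begin

definition prob_measures :: "real measure set" where
  "prob_measures = {M. prob_space M \<and> sets M = sets borel}"

definition prob_measures_r :: "real \<Rightarrow> real measure set" where
  "prob_measures_r r = {M \<in> prob_measures. integrable M (\<lambda>x. \<bar>x\<bar> powr r)}"

definition cdf :: "real measure \<Rightarrow> real \<Rightarrow> real" where
  "cdf M x = measure M {..x}"

text \<open>Quantile function \<open>F_\<mu>^{-1}(t) = sup {x. F_\<mu>(x) \<le> t}\<close> (relevant for t in ]0,1[).\<close>
definition quantile :: "real measure \<Rightarrow> real \<Rightarrow> real" where
  "quantile M t = Sup {x. cdf M x \<le> t}"

definition d_r :: "real \<Rightarrow> real measure \<Rightarrow> real measure \<Rightarrow> real" where
  "d_r r M N = (LINT t:{0<..<1}|lborel. \<bar>quantile M t - quantile N t\<bar> powr r) powr (1 / r)"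

text \<open>\<open>\<Xi>_n\<close> and \<open>\<Pi>_n\<close>, with vectors indexed by 1..n (values outside 1..n are irrelevant).\<close>
definition Xi_n :: "nat \<Rightarrow> (nat \<Rightarrow> real) set" where
  "Xi_n n = {x. \<forall>i. 1 \<le> i \<and> i < n \<longrightarrow> x i \<le> x (Suc i)}"

definition Pi_n :: "nat \<Rightarrow> (nat \<Rightarrow> real) set" where
  "Pi_n n = {p. (\<forall>i\<in>{1..n}. p i \<ge> 0) \<and> (\<Sum>i=1..n. p i) = 1}"

definition delta_px :: "nat \<Rightarrow> (nat \<Rightarrow> real) \<Rightarrow> (nat \<Rightarrow> real) \<Rightarrow> real measure" where
  "delta_px n p x = measure_of UNIV (sets borel)
     (\<lambda>A. \<Sum>i=1..n. ennreal (p i) * indicator A (x i))"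

definition Psum :: "(nat \<Rightarrow> real) \<Rightarrow> nat \<Rightarrow> real" where
  "Psum p i = (\<Sum>j=1..i. p j)"

definition Q_set :: "real measure \<Rightarrow> real \<Rightarrow> real set" where
  "Q_set M s = {Inf {x. cdf M x \<ge> s} .. Sup {x. cdf M x \<le> s}}"

definition Lr_dist_const :: "real \<Rightarrow> (real \<Rightarrow> real) \<Rightarrow> real set \<Rightarrow> real \<Rightarrow> real" where
  "Lr_dist_const r f J c = (LINT t:J|lborel. \<bar>f t - c\<bar> powr r) powr (1 / r)"

definition tau_r :: "real \<Rightarrow> (real \<Rightarrow> real) \<Rightarrow> real set \<Rightarrow> real" where
  "tau_r r f J = (THE c. \<forall>c'. Lr_dist_const r f J c \<le> Lr_dist_const r f J c')"

definition is_minimizer :: "real \<Rightarrow> real measure \<Rightarrow> nat \<Rightarrow> (nat \<Rightarrow> real) \<Rightarrow> (nat \<Rightarrow> real) \<Rightarrow> bool" where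
  "is_minimizer r M n p x \<longleftrightarrow> x \<in> Xi_n n \<and>
     (\<forall>y\<in>Xi_n n. d_r r (delta_px n p x) M \<le> d_r r (delta_px n p y) M)"

end

theory Submission
  imports Defs
begin

text \<open>Since the quantile function of \<open>\<delta>^p_y\<close> equals \<open>y\<^sub>i\<close> on the cell \<open>]P\<^sub>i\<^sub>-\<^sub>1, P\<^sub>i[\<close>, the
  quantity \<open>d\<^sub>r(\<delta>^p_y, \<mu>)\<^sup>r\<close> is a sum over the cells of \<open>\<integral> |F\<^sub>\<mu>\<^sup>-\<^sup>1 - y\<^sub>i|\<^sup>r\<close>, each depending on one
  coordinate only. Each cell cost is convex and coercive, hence has minimisers, and as \<open>F\<^sub>\<mu>\<^sup>-\<^sup>1\<close> is
  nondecreasing every minimiser lies between the values of \<open>F\<^sub>\<mu>\<^sup>-\<^sup>1\<close> at the ends of its cell.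
  So cellwise minimisers are automatically ordered, and the minimisers over \<open>\<Xi>\<^sub>n\<close> are exactly
  the vectors that minimise every non-degenerate cell. For \<open>r = 1\<close> a constant minimises a cell
  iff \<open>F\<^sub>\<mu>\<^sup>-\<^sup>1\<close> crosses it at the midpoint of the cell, i.e. iff it is a quantile of that level; for
  \<open>r > 1\<close> strict convexity makes the minimiser unique.\<close>

section \<open>The quantile function\<close>

lemma cdf_eq_distribution_cdf: "Defs.cdf M = Distribution_Functions.cdf M"
  by (auto simp: Defs.cdf_def Distribution_Functions.cdf_def)

lemma prob_measures_real_distribution: "M \<in> prob_measures \<Longrightarrow> real_distribution M"
  unfolding prob_measures_def real_distribution_def real_distribution_axioms_def by auto

context real_distribution
begin

lemma cdf_mono: "x \<le> y \<Longrightarrow> Defs.cdf M x \<le> Defs.cdf M y"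
  using cdf_nondecreasing by (simp add: cdf_eq_distribution_cdf)

lemma quantile_set_nonempty: "0 < t \<Longrightarrow> {x. Defs.cdf M x \<le> t} \<noteq> {}"
proof -
  assume "0 < t"
  then have "eventually (\<lambda>x. Distribution_Functions.cdf M x < t) at_bot"
    using order_tendstoD(2)[OF cdf_lim_at_bot] by blast
  then obtain x where "Distribution_Functions.cdf M x < t"
    by (metis eventually_happens' trivial_limit_at_bot_linorder)
  then show ?thesis by (auto simp: cdf_eq_distribution_cdf intro!: exI[of _ x])
qed

lemma quantile_set_bdd_above: "t < 1 \<Longrightarrow> bdd_above {x. Defs.cdf M x \<le> t}"
proof -
  assume "t < 1"
  then have "eventually (\<lambda>x. Distribution_Functions.cdf M x > t) at_top"
    using order_tendstoD(1)[OF cdf_lim_at_top_prob] by blast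
  then obtain y where y: "Distribution_Functions.cdf M y > t"
    by (metis eventually_happens' trivial_limit_at_top_linorder)
  show ?thesis
  proof (rule bdd_aboveI[of _ y])
    fix x assume "x \<in> {x. Defs.cdf M x \<le> t}"
    then show "x \<le> y"
      using y cdf_mono[of y x] by (force simp: cdf_eq_distribution_cdf)
  qed
qed

lemma quantile_le_if_less_cdf:
  assumes "0 < t" "t < Defs.cdf M c"
  shows "quantile M t \<le> c"
  unfolding quantile_def
proof (rule cSup_least[OF quantile_set_nonempty[OF assms(1)]])
  fix x assume "x \<in> {x. Defs.cdf M x \<le> t}"
  then show "x \<le> c"
    using assms(2) cdf_mono[of c x] by force
qed

lemma cdf_less_right:
  assumes "Defs.cdf M c < t"
  obtains c' where "c < c'" "Defs.cdf M c' < t"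
proof -
  have "eventually (\<lambda>x. Distribution_Functions.cdf M x < t) (at_right c)"
    using cdf_is_right_cont[of c] assms unfolding continuous_within
    by (simp add: order_tendstoD(2) cdf_eq_distribution_cdf)
  then obtain b where "b > c" "\<And>y. c < y \<Longrightarrow> y < b \<Longrightarrow> Distribution_Functions.cdf M y < t"
    unfolding eventually_at_right_field by blast
  then show thesis
    by (intro that[of "(c + b) / 2"]) (auto simp: cdf_eq_distribution_cdf)
qed

lemma le_cdf_if_quantile_le:
  assumes "t < 1" "quantile M t \<le> c"
  shows "t \<le> Defs.cdf M c"
proof (rule ccontr)
  assume "\<not> t \<le> Defs.cdf M c"
  then obtain x where x: "c < x" "Defs.cdf M x < t"
    using cdf_less_right by (metis not_le)
  have "x \<le> quantile M t"
    unfolding quantile_def using x(2) by (intro cSup_upper quantile_set_bdd_above assms(1)) simp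
  then show False using x assms(2) by simp
qed

lemma le_quantile_if_cdf_le:
  assumes "t < 1" "\<And>x. x < c \<Longrightarrow> Defs.cdf M x \<le> t"
  shows "c \<le> quantile M t"
  unfolding quantile_def
proof (rule dense_le)
  fix y assume "y < c"
  then show "y \<le> Sup {x. Defs.cdf M x \<le> t}"
    using assms by (intro cSup_upper quantile_set_bdd_above) auto
qed

lemma quantile_mono: "0 < s \<Longrightarrow> s \<le> t \<Longrightarrow> t < 1 \<Longrightarrow> quantile M s \<le> quantile M t"
  unfolding quantile_def
  by (rule cSup_subset_mono[OF quantile_set_nonempty quantile_set_bdd_above]) auto

lemma mono_on_quantile: "mono_on {0<..<1} (quantile M)"
  by (rule mono_onI) (auto intro: quantile_mono)

lemma borel_measurable_quantile:
  "quantile M \<in> borel_measurable (restrict_space lborel {0<..<1})"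
proof -
  have "quantile M \<in> borel_measurable (restrict_space borel {0<..<1})"
    by (rule borel_measurable_mono_on_fnc[OF mono_on_quantile])
  moreover have "sets (restrict_space lborel {0<..<1::real}) = sets (restrict_space borel {0<..<1})"
    by (simp add: sets_restrict_space)
  ultimately show ?thesis using measurable_cong_sets by blast
qed

text \<open>The quantile transform: under the uniform distribution on \<open>]0,1[\<close> the quantile function
  is distributed according to \<open>M\<close>, since \<open>quantile M t \<le> x \<longleftrightarrow> t \<le> F(x)\<close> for \<open>0 < t < 1\<close>.\<close>
lemma distr_quantile: "distr (restrict_space lborel {0<..<1::real}) borel (quantile M) = M"
proof (intro cdf_unique ext)
  let ?\<Omega> = "restrict_space lborel {0<..<1}::real measure"
  interpret \<Omega>: prob_space ?\<Omega>
    by (auto simp add: emeasure_restrict_space space_restrict_space intro!: prob_spaceI)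
  have meas: "quantile M \<in> ?\<Omega> \<rightarrow>\<^sub>M borel" using borel_measurable_quantile by simp
  show "real_distribution (distr ?\<Omega> borel (quantile M))"
    using meas by simp
  fix x
  let ?F = "Distribution_Functions.cdf M x"
  let ?A = "quantile M -` {..x} \<inter> {0<..<1}"
  have A: "?A \<in> sets lborel"
  proof -
    have "quantile M -` {..x} \<inter> space ?\<Omega> \<in> sets ?\<Omega>"
      by (rule measurable_sets[OF meas]) simp
    then show ?thesis
      by (subst (asm) sets_restrict_space_iff) (auto simp: space_restrict_space)
  qed
  have "AE t in lborel. (t \<in> ?A) = (t \<in> {0<..<?F})"
    using AE_lborel_singleton[of ?F]
  proof eventually_elim
    case (elim t)
    have "t < 1" if "t < ?F" using that cdf_bounded_prob[of x] by linarith
    then show ?case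
      using elim le_cdf_if_quantile_le[of t x] quantile_le_if_less_cdf[of t x]
      by (auto simp: cdf_eq_distribution_cdf)
  qed
  then have "measure lborel ?A = measure lborel {0<..<?F}"
    unfolding measure_def using A by (intro arg_cong[where f=enn2real] emeasure_eq_AE) auto
  then show "Distribution_Functions.cdf (distr ?\<Omega> borel (quantile M)) x = ?F"
    unfolding Distribution_Functions.cdf_def using meas
    by (simp add: measure_distr space_restrict_space measure_restrict_space cdf_nonneg)
qed standard

lemma set_integrable_abs_quantile_powr:
  assumes "integrable M (\<lambda>x. \<bar>x\<bar> powr r)"
  shows "set_integrable lborel {0<..<1} (\<lambda>t. \<bar>quantile M t\<bar> powr r)"
proof -
  have meas: "quantile M \<in> restrict_space lborel {0<..<1} \<rightarrow>\<^sub>M borel"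
    using borel_measurable_quantile by simp
  have "integrable (distr (restrict_space lborel {0<..<1::real}) borel (quantile M)) (\<lambda>x. \<bar>x\<bar> powr r)"
    using assms distr_quantile by simp
  then have "integrable (restrict_space lborel {0<..<1::real}) (\<lambda>t. \<bar>quantile M t\<bar> powr r)"
    by (subst (asm) integrable_distr_eq[OF meas]) auto
  then show ?thesis
    by (subst set_integrable_eq) auto
qed

lemma set_integrable_abs_quantile_diff_powr:
  assumes "integrable M (\<lambda>x. \<bar>x\<bar> powr r)" "r > 0"
  shows "set_integrable lborel {0<..<1} (\<lambda>t. \<bar>quantile M t - c\<bar> powr r)"
proof (rule set_integrable_bound)
  show "set_integrable lborel {0<..<1::real} (\<lambda>t. 2 powr r * (\<bar>quantile M t\<bar> powr r + \<bar>c\<bar> powr r))"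
    by (intro set_integrable_mult_right set_integral_add(1) set_integrable_abs_quantile_powr assms)
      (auto simp: set_integrable_def intro: integrable_indicator)
  show "set_borel_measurable lborel {0<..<1} (\<lambda>t. \<bar>quantile M t - c\<bar> powr r)"
    using borel_measurable_quantile unfolding set_borel_measurable_def
    by (subst borel_measurable_restrict_space_iff[symmetric]) auto
  have "\<bar>quantile M t - c\<bar> powr r \<le> 2 powr r * (\<bar>quantile M t\<bar> powr r + \<bar>c\<bar> powr r)" for t
  proof -
    have "\<bar>quantile M t - c\<bar> powr r \<le> (2 * max \<bar>quantile M t\<bar> \<bar>c\<bar>) powr r"
      by (intro powr_mono2) (use assms in auto)
    also have "\<dots> = 2 powr r * max \<bar>quantile M t\<bar> \<bar>c\<bar> powr r"
      by (simp add: powr_mult)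
    also have "\<dots> \<le> 2 powr r * (\<bar>quantile M t\<bar> powr r + \<bar>c\<bar> powr r)"
      by (intro mult_left_mono) (auto simp: max_def)
    finally show ?thesis .
  qed
  then show "AE t in lborel. t \<in> {0<..<1} \<longrightarrow>
      norm (\<bar>quantile M t - c\<bar> powr r) \<le> norm (2 powr r * (\<bar>quantile M t\<bar> powr r + \<bar>c\<bar> powr r))"
    by simp
qed

lemma mem_Q_set_iff:
  assumes s: "0 < s" "s < 1"
  shows "c \<in> Q_set M s \<longleftrightarrow> s \<le> Defs.cdf M c \<and> (\<forall>x<c. Defs.cdf M x \<le> s)"
proof -
  interpret cdf_distribution M by unfold_locales
  have "Inf {x. Defs.cdf M x \<ge> s} \<le> c \<longleftrightarrow> s \<le> Defs.cdf M c"
    using pseudoinverse[OF s, of c] by (simp add: cdf_eq_distribution_cdf)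
  moreover have "c \<le> Sup {x. Defs.cdf M x \<le> s} \<longleftrightarrow> (\<forall>x<c. Defs.cdf M x \<le> s)"
  proof
    assume c: "c \<le> Sup {x. Defs.cdf M x \<le> s}"
    show "\<forall>x<c. Defs.cdf M x \<le> s"
    proof (intro allI impI)
      fix x assume "x < c"
      then obtain y where "Defs.cdf M y \<le> s" "x < y"
        using c less_cSupD[OF quantile_set_nonempty[OF s(1)]] by force
      then show "Defs.cdf M x \<le> s"
        using cdf_mono[of x y] by simp
    qed
  qed (use le_quantile_if_cdf_le[OF s(2)] in \<open>simp add: quantile_def\<close>)
  ultimately show ?thesis unfolding Q_set_def by auto
qed

end

section \<open>The discrete measure \<open>\<delta>^p_x\<close> and its quantile function\<close>

lemma emeasure_delta_px:
  assumes "\<And>i. i \<in> {1..n} \<Longrightarrow> p i \<ge> 0" and "A \<in> sets borel"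
  shows "emeasure (delta_px n p y) A = (\<Sum>i=1..n. ennreal (p i) * indicator A (y i))"
  unfolding delta_px_def
proof (rule emeasure_measure_of_sigma[OF _ _ _ assms(2)])
  show "sigma_algebra UNIV (sets borel)"
    using sets.sigma_algebra_axioms[of borel] by simp
  show "positive (sets borel) (\<lambda>A. \<Sum>i=1..n. ennreal (p i) * indicator A (y i))"
    unfolding positive_def by simp
  show "countably_additive (sets borel) (\<lambda>A. \<Sum>i=1..n. ennreal (p i) * indicator A (y i))"
    unfolding countably_additive_def
  proof (intro allI impI)
    fix B :: "nat \<Rightarrow> real set" assume "range B \<subseteq> sets borel" "disjoint_family B"
    then show "(\<Sum>j. \<Sum>i=1..n. ennreal (p i) * indicator (B j) (y i))
        = (\<Sum>i=1..n. ennreal (p i) * indicator (\<Union> (range B)) (y i))"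
      by (subst suminf_sum[OF summableI]) (simp add: suminf_indicator)
  qed
qed

lemma cdf_delta_px:
  assumes "\<And>i. i \<in> {1..n} \<Longrightarrow> p i \<ge> 0"
  shows "Defs.cdf (delta_px n p y) x = (\<Sum>i=1..n. if y i \<le> x then p i else 0)"
proof -
  have "emeasure (delta_px n p y) {..x} = (\<Sum>i=1..n. ennreal (p i) * indicator {..x} (y i))"
    by (rule emeasure_delta_px[OF assms]) auto
  also have "\<dots> = (\<Sum>i=1..n. ennreal (if y i \<le> x then p i else 0))"
    by (intro sum.cong) (auto simp: indicator_def)
  also have "\<dots> = ennreal (\<Sum>i=1..n. if y i \<le> x then p i else 0)"
    by (rule sum_ennreal) (use assms in auto)
  moreover have "0 \<le> (\<Sum>i=1..n. if y i \<le> x then p i else 0)"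
    by (intro sum_nonneg) (use assms in auto)
  ultimately show ?thesis
    unfolding Defs.cdf_def measure_def by simp
qed

lemma real_distribution_delta_px:
  assumes "p \<in> Pi_n n"
  shows "real_distribution (delta_px n p y)"
proof -
  have p: "\<And>i. i \<in> {1..n} \<Longrightarrow> p i \<ge> 0" "(\<Sum>i=1..n. p i) = 1"
    using assms by (auto simp: Pi_n_def)
  have space: "space (delta_px n p y) = UNIV" and sets: "sets (delta_px n p y) = sets borel"
    unfolding delta_px_def by (simp_all add: sets.sigma_sets_eq[of borel, simplified])
  have "emeasure (delta_px n p y) UNIV = (\<Sum>i=1..n. ennreal (p i))"
    by (subst emeasure_delta_px[OF p(1)]) auto
  also have "\<dots> = ennreal (\<Sum>i=1..n. p i)"
    by (rule sum_ennreal) (use p(1) in auto)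
  finally have "emeasure (delta_px n p y) UNIV = ennreal (\<Sum>i=1..n. p i)" .
  then have "prob_space (delta_px n p y)"
    using p(2) space by (intro prob_spaceI) simp
  then show ?thesis
    unfolding real_distribution_def real_distribution_axioms_def using sets by simp
qed

lemma Xi_n_mono:
  assumes "y \<in> Xi_n n" "1 \<le> i" "i \<le> j" "j \<le> n"
  shows "y i \<le> y j"
  using assms(3,4)
proof (induction j rule: dec_induct)
  case (step k)
  then have "y k \<le> y (Suc k)" using assms(1,2) unfolding Xi_n_def by auto
  with step show ?case by simp
qed simp

lemma Psum_mono: "p \<in> Pi_n n \<Longrightarrow> i \<le> j \<Longrightarrow> j \<le> n \<Longrightarrow> Psum p i \<le> Psum p j"
  unfolding Psum_def Pi_n_def by (intro sum_mono2) auto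

lemma Psum_bounds:
  assumes "p \<in> Pi_n n" "i \<in> {1..n}"
  shows "0 \<le> Psum p (i - 1)" "Psum p i \<le> 1"
  using Psum_mono[OF assms(1), of 0 "i - 1"] Psum_mono[OF assms(1), of i n] assms
  by (auto simp: Psum_def Pi_n_def)

lemma quantile_delta_px:
  assumes p: "p \<in> Pi_n n" and y: "y \<in> Xi_n n" and i: "i \<in> {1..n}"
    and t: "Psum p (i - 1) < t" "t < Psum p i"
  shows "quantile (delta_px n p y) t = y i"
proof -
  have p0: "\<And>j. j \<in> {1..n} \<Longrightarrow> p j \<ge> 0" using p by (auto simp: Pi_n_def)
  let ?F = "\<lambda>x. \<Sum>j=1..n. if y j \<le> x then p j else 0"
  have "?F x > t" if "y i \<le> x" for x
  proof -
    have "Psum p i = (\<Sum>j=1..i. if y j \<le> x then p j else 0)"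
      unfolding Psum_def using i that Xi_n_mono[OF y, of _ i] by (intro sum.cong) force+
    also have "\<dots> \<le> ?F x"
      using i p0 by (intro sum_mono2) auto
    finally show ?thesis using t by simp
  qed
  moreover have "?F x \<le> t" if "x < y i" for x
  proof -
    have "?F x = (\<Sum>j=1..i-1. if y j \<le> x then p j else 0)"
    proof (rule sum.mono_neutral_cong_right)
      show "\<forall>j\<in>{1..n} - {1..i - 1}. (if y j \<le> x then p j else 0) = 0"
      proof
        fix j assume "j \<in> {1..n} - {1..i - 1}"
        then have "y i \<le> y j" using i by (intro Xi_n_mono[OF y]) auto
        then show "(if y j \<le> x then p j else 0) = 0" using that by simp
      qed
    qed (use i in auto)
    also have "\<dots> \<le> Psum p (i - 1)"
      unfolding Psum_def using i p0 by (intro sum_mono) auto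
    finally show ?thesis using t by simp
  qed
  ultimately have "{x. Defs.cdf (delta_px n p y) x \<le> t} = {..<y i}"
    using cdf_delta_px[of n p y, OF p0] by (auto simp: not_less) (meson leI not_le)
  then show ?thesis unfolding quantile_def by simp
qed

section \<open>Convexity of \<open>|x|\<^sup>r\<close>\<close>

lemma powr_convex_nonneg:
  fixes r x y u :: real
  assumes r: "r \<ge> 1" and x: "x \<ge> 0" and y: "y \<ge> 0" and u: "0 \<le> u" "u \<le> 1"
  shows "(u * x + (1 - u) * y) powr r \<le> u * x powr r + (1 - u) * y powr r"
proof (cases "x = 0 \<or> y = 0")
  case True
  have scale: "(v * z) powr r \<le> v * z powr r" if v: "0 \<le> v" "v \<le> 1" and z: "0 \<le> z" for v z :: real
  proof -
    have "v powr r \<le> v"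
      using powr_mono'[of 1 r v] v r by simp
    then show ?thesis using v z by (simp add: powr_mult mult_right_mono)
  qed
  then show ?thesis using True scale[of "1 - u" y] scale[of u x] u x y by auto
next
  case False
  then have "x \<in> {0<..}" "y \<in> {0<..}" using x y by auto
  then show ?thesis
    using convex_onD[OF powr_convex[OF r], of "1 - u" x y] u by simp
qed

lemma abs_powr_convex:
  fixes r x y u :: real
  assumes r: "r \<ge> 1" and u: "0 \<le> u" "u \<le> 1"
  shows "\<bar>u * x + (1 - u) * y\<bar> powr r \<le> u * \<bar>x\<bar> powr r + (1 - u) * \<bar>y\<bar> powr r"
proof -
  have "\<bar>u * x + (1 - u) * y\<bar> \<le> u * \<bar>x\<bar> + (1 - u) * \<bar>y\<bar>"
    using abs_triangle_ineq[of "u * x" "(1 - u) * y"] u by (simp add: abs_mult)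
  then have "\<bar>u * x + (1 - u) * y\<bar> powr r \<le> (u * \<bar>x\<bar> + (1 - u) * \<bar>y\<bar>) powr r"
    using r by (intro powr_mono2) auto
  also have "\<dots> \<le> u * \<bar>x\<bar> powr r + (1 - u) * \<bar>y\<bar> powr r"
    by (rule powr_convex_nonneg) (use r u in auto)
  finally show ?thesis .
qed

text \<open>By the mean value theorem the increments of \<open>z\<^sup>r\<close> over the two
  halves of \<open>[x, y]\<close> are governed by values of the strictly increasing derivative \<open>r z\<^sup>r\<^sup>-\<^sup>1\<close>.\<close>
lemma powr_midpoint_less:
  fixes r x y :: real
  assumes r: "r > 1" and xy: "0 < x" "x < y"
  shows "((x + y) / 2) powr r < (x powr r + y powr r) / 2"
proof -
  define m where "m = (x + y) / 2"
  have m: "x < m" "m < y" "m - x = (y - x) / 2" "y - m = (y - x) / 2"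
    using xy by (simp_all add: m_def field_simps)
  have D: "\<And>z. 0 < z \<Longrightarrow> DERIV (\<lambda>z. z powr r) z :> r * z powr (r - 1)"
    by (auto intro!: derivative_eq_intros simp: powr_diff field_simps)
  obtain z1 where z1: "m < z1" "z1 < y" "y powr r - m powr r = (y - m) * (r * z1 powr (r - 1))"
    using MVT2[of m y "\<lambda>z. z powr r" "\<lambda>z. r * z powr (r - 1)"] D xy m by force
  obtain z2 where z2: "x < z2" "z2 < m" "m powr r - x powr r = (m - x) * (r * z2 powr (r - 1))"
    using MVT2[of x m "\<lambda>z. z powr r" "\<lambda>z. r * z powr (r - 1)"] D xy m by force
  have "z2 powr (r - 1) < z1 powr (r - 1)"
    using z1 z2 xy r by (intro powr_less_mono2) auto
  then have "(y - x) / 2 * (r * z2 powr (r - 1)) < (y - x) / 2 * (r * z1 powr (r - 1))"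
    using xy r by (intro mult_strict_left_mono) auto
  then have "m powr r - x powr r < y powr r - m powr r"
    using z1(3) z2(3) unfolding m(3,4) by linarith
  then show ?thesis unfolding m_def by simp
qed

lemma powr_midpoint_less_nonneg:
  fixes r x y :: real
  assumes r: "r > 1" and xy: "0 \<le> x" "x < y"
  shows "((x + y) / 2) powr r < (x powr r + y powr r) / 2"
proof (cases "x = 0")
  case True
  have "2 powr 1 < 2 powr r" using r by (intro powr_less_mono) auto
  then have "y powr r / 2 powr r < y powr r / 2"
    using xy by (intro divide_strict_left_mono) auto
  then show ?thesis using True xy by (simp add: powr_divide)
next
  case False
  then show ?thesis using powr_midpoint_less[OF r, of x y] xy by simp
qed

lemma abs_powr_midpoint_less:
  fixes r u v :: real
  assumes r: "r > 1" and uv: "u \<noteq> v"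
  shows "\<bar>(u + v) / 2\<bar> powr r < (\<bar>u\<bar> powr r + \<bar>v\<bar> powr r) / 2"
proof (cases "\<bar>u\<bar> = \<bar>v\<bar>")
  case True
  then have "v = - u" "u \<noteq> 0" using uv by (auto simp: abs_eq_iff)
  then show ?thesis by simp
next
  case False
  have "\<bar>(u + v) / 2\<bar> powr r \<le> ((\<bar>u\<bar> + \<bar>v\<bar>) / 2) powr r"
    using r by (intro powr_mono2) auto
  also have "\<dots> < (\<bar>u\<bar> powr r + \<bar>v\<bar> powr r) / 2"
    using False powr_midpoint_less_nonneg[OF r, of "\<bar>u\<bar>" "\<bar>v\<bar>"]
      powr_midpoint_less_nonneg[OF r, of "\<bar>v\<bar>" "\<bar>u\<bar>"]
    by (cases "\<bar>u\<bar> < \<bar>v\<bar>") (auto simp: add.commute)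
  finally show ?thesis .
qed

section \<open>Set integrals over intervals\<close>

lemma set_integral_nonneg:
  fixes g :: "real \<Rightarrow> real"
  assumes "\<And>t. t \<in> A \<Longrightarrow> 0 \<le> g t"
  shows "0 \<le> (LINT t:A|lborel. g t)"
  unfolding set_lebesgue_integral_def
  by (rule Bochner_Integration.integral_nonneg) (use assms in \<open>auto simp: indicator_def\<close>)

lemma set_integral_mono_set:
  fixes g :: "real \<Rightarrow> real"
  assumes "set_integrable lborel A g" "B \<in> sets lborel" "B \<subseteq> A" "\<And>t. t \<in> A \<Longrightarrow> 0 \<le> g t"
  shows "(LINT t:B|lborel. g t) \<le> (LINT t:A|lborel. g t)"
  unfolding set_lebesgue_integral_def
proof (rule integral_mono)
  show "integrable lborel (\<lambda>x. indicat_real B x *\<^sub>R g x)"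
    using set_integrable_subset[OF assms(1-3)] by (simp add: set_integrable_def)
  show "integrable lborel (\<lambda>x. indicat_real A x *\<^sub>R g x)"
    using assms(1) by (simp add: set_integrable_def)
  show "indicat_real B t *\<^sub>R g t \<le> indicat_real A t *\<^sub>R g t" for t
    using assms(3,4) by (auto simp: indicator_def)
qed

lemma set_integral_pos_Ioo:
  fixes g :: "real \<Rightarrow> real"
  assumes ab: "a < b" and int: "set_integrable lborel {a<..<b} g"
    and pos: "\<And>t. t \<in> {a<..<b} \<Longrightarrow> 0 < g t"
  shows "0 < (LINT t:{a<..<b}|lborel. g t)"
proof (rule ccontr)
  let ?h = "\<lambda>t. indicat_real {a<..<b} t *\<^sub>R g t"
  assume "\<not> ?thesis"
  then have "integral\<^sup>L lborel ?h = 0"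
    using set_integral_nonneg[of "{a<..<b}" g] pos unfolding set_lebesgue_integral_def
    by (simp add: less_imp_le)
  then have "AE t in lborel. ?h t = 0"
    using int pos by (subst (asm) integral_nonneg_eq_0_iff_AE)
      (auto simp: set_integrable_def indicator_def less_imp_le)
  then have "AE t in lborel. t \<notin> {a<..<b}"
    by eventually_elim (use pos in fastforce)
  then have "emeasure lborel {a<..<b} = 0"
    by (subst (asm) AE_iff_measurable[of "{a<..<b}"]) auto
  then show False using ab by simp
qed

lemma set_integral_Icc_eq_Ioo:
  fixes g :: "real \<Rightarrow> real"
  assumes "a < b" and meas: "set_borel_measurable lborel {a<..<b} g"
  shows "(LINT t:{a..b}|lborel. g t) = (LINT t:{a<..<b}|lborel. g t)"
proof -
  have "(\<lambda>t. indicat_real {a..b} t *\<^sub>R g t)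
      = (\<lambda>t. indicat_real {a<..<b} t *\<^sub>R g t + (indicat_real {a} t * g a + indicat_real {b} t * g b))"
    using assms(1) by (auto simp: indicator_def fun_eq_iff)
  then have "set_borel_measurable lborel {a..b} g"
    using meas unfolding set_borel_measurable_def by simp
  moreover have "AE x in lborel. x \<in> {a<..<b} \<longleftrightarrow> x \<in> {a..b}"
    using AE_lborel_singleton[of a] AE_lborel_singleton[of b] by eventually_elim auto
  ultimately show ?thesis by (rule set_integral_cong_set[OF meas])
qed

lemma step_function_eq_indicators:
  fixes a b w k :: real
  assumes "a \<le> w" "w \<le> b"
  shows "(\<lambda>t. indicat_real {a<..<b} t *\<^sub>R (if t < w then k else - k))
       = (\<lambda>t. k * indicat_real {a<..<w} t - k * indicat_real ({w..<b} \<inter> {a<..}) t)"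
    and "{w..<b} \<inter> {a<..} = (if w = a then {a<..<b} else {w..<b})"
  using assms by (auto simp: indicator_def fun_eq_iff)

lemma set_integrable_step:
  fixes a b w k :: real
  assumes "a \<le> w" "w \<le> b"
  shows "set_integrable lborel {a<..<b} (\<lambda>t. if t < w then k else - k)"
  unfolding set_integrable_def step_function_eq_indicators[OF assms]
  using assms by (intro Bochner_Integration.integrable_diff integrable_mult_right integrable_real_indicator)
    (auto simp: emeasure_lborel_Ioo emeasure_lborel_Ico)

lemma set_integral_step:
  fixes a b w k :: real
  assumes "a \<le> w" "w \<le> b"
  shows "(LINT t:{a<..<b}|lborel. (if t < w then k else - k)) = k * (2 * w - a - b)"
proof -
  have "integrable lborel (indicat_real {a<..<w})" "integrable lborel (indicat_real ({w..<b} \<inter> {a<..}))"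
    using assms by (auto intro!: integrable_real_indicator
        simp: emeasure_lborel_Ioo emeasure_lborel_Ico step_function_eq_indicators(2))
  then have "(LINT t:{a<..<b}|lborel. (if t < w then k else - k)) = k * (w - a) - k * (b - w)"
    unfolding set_lebesgue_integral_def step_function_eq_indicators[OF assms]
    using assms by (simp add: step_function_eq_indicators(2)[OF assms])
  then show ?thesis by (simp add: algebra_simps)
qed

lemma set_integral_le_step:
  fixes g :: "real \<Rightarrow> real"
  assumes "set_integrable lborel {a<..<b} g" "a \<le> w" "w \<le> b"
    and "\<And>t. t \<in> {a<..<b} \<Longrightarrow> g t \<le> (if t < w then k else - k)"
  shows "(LINT t:{a<..<b}|lborel. g t) \<le> k * (2 * w - a - b)"
  using set_integral_mono[OF assms(1) set_integrable_step[OF assms(2,3)]] assms(4)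
  by (simp add: set_integral_step[OF assms(2,3)])

lemma set_integral_ge_step:
  fixes g :: "real \<Rightarrow> real"
  assumes "set_integrable lborel {a<..<b} g" "a \<le> w" "w \<le> b"
    and "\<And>t. t \<in> {a<..<b} \<Longrightarrow> (if t < w then k else - k) \<le> g t"
  shows "k * (2 * w - a - b) \<le> (LINT t:{a<..<b}|lborel. g t)"
  using set_integral_mono[OF set_integrable_step[OF assms(2,3)] assms(1)] assms(4)
  by (simp add: set_integral_step[OF assms(2,3)])

section \<open>The \<open>L\<^sup>r\<close> cost of a constant on a cell\<close>

lemma powr_le_powr_iff_base:
  fixes x y e :: real
  shows "0 \<le> x \<Longrightarrow> 0 \<le> y \<Longrightarrow> 0 < e \<Longrightarrow> x powr e \<le> y powr e \<longleftrightarrow> x \<le> y"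
proof -
  assume "0 \<le> x" "0 \<le> y" "0 < e"
  then show ?thesis
    using powr_less_mono2[of e y x] powr_mono2[of e x y] by (meson leI less_le_not_le)
qed

definition Lr_cost :: "real \<Rightarrow> (real \<Rightarrow> real) \<Rightarrow> real \<Rightarrow> real \<Rightarrow> real \<Rightarrow> real" where
  "Lr_cost r f a b c = (LINT t:{a<..<b}|lborel. \<bar>f t - c\<bar> powr r)"

lemma Lr_cost_nonneg: "0 \<le> Lr_cost r f a b c"
  unfolding Lr_cost_def by (rule set_integral_nonneg) simp

lemma Lr_cost_degenerate: "b \<le> a \<Longrightarrow> Lr_cost r f a b c = 0"
  unfolding Lr_cost_def by (simp add: set_lebesgue_integral_def)

locale monotone_Lr_cost =
  fixes r :: real and f :: "real \<Rightarrow> real" and a b :: real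
  assumes less: "a < b" and one_le_r: "1 \<le> r"
    and integrable: "\<And>c. set_integrable lborel {a<..<b} (\<lambda>t. \<bar>f t - c\<bar> powr r)"
    and mono: "mono_on {a<..<b} f"
begin

abbreviation cost :: "real \<Rightarrow> real" where
  "cost \<equiv> Lr_cost r f a b"

lemma convex_on_cost: "convex_on UNIV cost"
proof (rule convex_onI)
  fix u x y :: real assume u: "0 < u" "u < 1"
  have "cost ((1 - u) *\<^sub>R x + u *\<^sub>R y) \<le>
      (LINT t:{a<..<b}|lborel. (1 - u) * \<bar>f t - x\<bar> powr r + u * \<bar>f t - y\<bar> powr r)"
    unfolding Lr_cost_def
  proof (rule set_integral_mono)
    show "set_integrable lborel {a<..<b} (\<lambda>t. (1 - u) * \<bar>f t - x\<bar> powr r + u * \<bar>f t - y\<bar> powr r)"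
      by (intro set_integral_add(1) set_integrable_mult_right integrable)
    fix t
    have "\<bar>f t - ((1 - u) *\<^sub>R x + u *\<^sub>R y)\<bar> powr r = \<bar>(1 - u) * (f t - x) + (1 - (1 - u)) * (f t - y)\<bar> powr r"
      by (simp add: algebra_simps)
    also have "\<dots> \<le> (1 - u) * \<bar>f t - x\<bar> powr r + (1 - (1 - u)) * \<bar>f t - y\<bar> powr r"
      by (rule abs_powr_convex) (use one_le_r u in auto)
    finally show "\<bar>f t - ((1 - u) *\<^sub>R x + u *\<^sub>R y)\<bar> powr r \<le> (1 - u) * \<bar>f t - x\<bar> powr r + u * \<bar>f t - y\<bar> powr r"
      by simp
  qed (rule integrable)
  also have "\<dots> = (1 - u) * cost x + u * cost y"
    unfolding Lr_cost_def by (subst set_integral_add(2)) (auto intro: integrable)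
  finally show "cost ((1 - u) *\<^sub>R x + u *\<^sub>R y) \<le> (1 - u) * cost x + u * cost y" .
qed simp

lemma continuous_on_cost: "continuous_on UNIV cost"
  by (rule convex_on_continuous[OF open_UNIV convex_on_cost])

lemma cost_ge_on_subinterval:
  assumes "a \<le> a'" "a' < b'" "b' \<le> b" "1 \<le> K" "\<And>t. t \<in> {a'<..<b'} \<Longrightarrow> K \<le> \<bar>f t - c\<bar>"
  shows "(b' - a') * K \<le> cost c"
proof -
  have "(b' - a') * K = (LINT t:{a'<..<b'}|lborel. K)"
    using assms(2) by (simp add: set_integral_const)
  also have "\<dots> \<le> (LINT t:{a'<..<b'}|lborel. \<bar>f t - c\<bar> powr r)"
  proof (rule set_integral_mono)
    show "set_integrable lborel {a'<..<b'} (\<lambda>t. K)"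
      unfolding set_integrable_def using assms(2) by (intro integrable_indicator) auto
    show "set_integrable lborel {a'<..<b'} (\<lambda>t. \<bar>f t - c\<bar> powr r)"
      by (rule set_integrable_subset[OF integrable]) (use assms in auto)
    fix t assume t: "t \<in> {a'<..<b'}"
    have "K \<le> \<bar>f t - c\<bar> powr 1" using assms(5)[OF t] by simp
    also have "\<dots> \<le> \<bar>f t - c\<bar> powr r"
      using assms(4) assms(5)[OF t] one_le_r by (intro powr_mono) auto
    finally show "K \<le> \<bar>f t - c\<bar> powr r" .
  qed
  also have "\<dots> \<le> cost c"
    unfolding Lr_cost_def by (rule set_integral_mono_set[OF integrable]) (use assms in auto)
  finally show ?thesis .
qed

text \<open>Coercivity: a far away constant is far from \<open>f\<close> on one half of the cell,
  since \<open>f\<close> is bounded on either side of the midpoint by monotonicity.\<close>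
lemma cost_ge_linear: "\<exists>K. \<forall>c. K \<le> \<bar>c\<bar> \<longrightarrow> (b - a) / 4 * \<bar>c\<bar> \<le> cost c"
proof (intro exI allI impI)
  define m where "m = (a + b) / 2"
  have m: "a < m" "m < b" "m - a = (b - a) / 2" "b - m = (b - a) / 2"
    using less by (auto simp: m_def field_simps)
  fix c assume c: "max 2 (2 * \<bar>f m\<bar>) \<le> \<bar>c\<bar>"
  show "(b - a) / 4 * \<bar>c\<bar> \<le> cost c"
  proof (cases "c \<ge> 0")
    case True
    have "(m - a) * (\<bar>c\<bar> / 2) \<le> cost c"
    proof (rule cost_ge_on_subinterval)
      fix t assume "t \<in> {a<..<m}"
      then have "f t \<le> f m" using m by (intro mono_onD[OF mono]) auto
      then show "\<bar>c\<bar> / 2 \<le> \<bar>f t - c\<bar>" using c True by auto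
    qed (use m c in auto)
    then show ?thesis using m by simp
  next
    case False
    have "(b - m) * (\<bar>c\<bar> / 2) \<le> cost c"
    proof (rule cost_ge_on_subinterval)
      fix t assume "t \<in> {m<..<b}"
      then have "f m \<le> f t" using m by (intro mono_onD[OF mono]) auto
      then show "\<bar>c\<bar> / 2 \<le> \<bar>f t - c\<bar>" using c False by auto
    qed (use m c in auto)
    then show ?thesis using m by simp
  qed
qed

lemma cost_has_minimizer: "\<exists>c. \<forall>c'. cost c \<le> cost c'"
proof -
  obtain K0 where K0: "\<And>c. K0 \<le> \<bar>c\<bar> \<Longrightarrow> (b - a) / 4 * \<bar>c\<bar> \<le> cost c"
    using cost_ge_linear by blast
  define K where "K = max K0 (4 * cost 0 / (b - a) + 1)"
  have far: "cost 0 < cost c'" if "K < \<bar>c'\<bar>" for c'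
  proof -
    have "cost 0 < (b - a) / 4 * \<bar>c'\<bar>"
      using that less by (simp add: K_def field_simps)
    then show ?thesis using K0[of c'] that unfolding K_def by simp
  qed
  have "0 \<le> 4 * cost 0 / (b - a)"
    using Lr_cost_nonneg[of r f a b 0] less by simp
  then have "K \<ge> 0" unfolding K_def by simp
  then obtain c where c: "c \<in> {-K..K}" "\<And>y. y \<in> {-K..K} \<Longrightarrow> cost c \<le> cost y"
    using continuous_attains_inf[OF compact_Icc _ continuous_on_subset[OF continuous_on_cost]]
    by (metis atLeastAtMost_iff empty_iff neg_le_0_iff_le subset_UNIV)
  have "cost c \<le> cost c'" for c'
  proof (cases "c' \<in> {-K..K}")
    case False
    then have "cost 0 < cost c'" by (intro far) auto
    moreover have "cost c \<le> cost 0" using c(2)[of 0] \<open>K \<ge> 0\<close> by simp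
    ultimately show ?thesis by simp
  qed (rule c(2))
  then show ?thesis by blast
qed

lemma cost_minimizer_unique:
  assumes r: "r > 1" and c1: "\<forall>c'. cost c1 \<le> cost c'" and c2: "\<forall>c'. cost c2 \<le> cost c'"
  shows "c1 = c2"
proof (rule ccontr)
  assume ne: "c1 \<noteq> c2"
  define m where "m = (c1 + c2) / 2"
  let ?g = "\<lambda>t. (1/2) * \<bar>f t - c1\<bar> powr r + (1/2) * \<bar>f t - c2\<bar> powr r - \<bar>f t - m\<bar> powr r"
  have "0 < (LINT t:{a<..<b}|lborel. ?g t)"
  proof (rule set_integral_pos_Ioo[OF less])
    show "set_integrable lborel {a<..<b} ?g"
      by (intro set_integral_diff(1) set_integral_add(1) set_integrable_mult_right integrable)
    fix t
    have mid: "((f t - c1) + (f t - c2)) / 2 = f t - m" by (simp add: m_def field_simps)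
    have "\<bar>((f t - c1) + (f t - c2)) / 2\<bar> powr r < (\<bar>f t - c1\<bar> powr r + \<bar>f t - c2\<bar> powr r) / 2"
      by (rule abs_powr_midpoint_less[OF r]) (use ne in auto)
    then show "0 < ?g t" unfolding mid by simp
  qed
  also have "(LINT t:{a<..<b}|lborel. ?g t) = (1/2) * cost c1 + (1/2) * cost c2 - cost m"
    unfolding Lr_cost_def
    by (subst set_integral_diff(2), (intro set_integral_add(1) set_integrable_mult_right integrable)+)
       (subst set_integral_add(2), (intro set_integrable_mult_right integrable)+, simp)
  finally show False using c1[rule_format, of m] c2[rule_format, of m] by linarith
qed

lemma cost_less_if_closer:
  assumes "\<And>t. t \<in> {a<..<b} \<Longrightarrow> \<bar>f t - v\<bar> < \<bar>f t - c\<bar>"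
  shows "cost v < cost c"
proof -
  have "0 < (LINT t:{a<..<b}|lborel. \<bar>f t - c\<bar> powr r - \<bar>f t - v\<bar> powr r)"
  proof (rule set_integral_pos_Ioo[OF less])
    show "set_integrable lborel {a<..<b} (\<lambda>t. \<bar>f t - c\<bar> powr r - \<bar>f t - v\<bar> powr r)"
      by (intro set_integral_diff(1) integrable)
    fix t assume "t \<in> {a<..<b}"
    then show "0 < \<bar>f t - c\<bar> powr r - \<bar>f t - v\<bar> powr r"
      using assms one_le_r by (simp add: powr_less_mono2)
  qed
  then show ?thesis
    unfolding Lr_cost_def by (subst (asm) set_integral_diff(2)) (auto intro: integrable)
qed

text \<open>Moving a constant towards the range of \<open>f\<close> strictly decreases its distance to every
  value of \<open>f\<close>, so no minimiser lies outside that range.\<close>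
lemma cost_minimizer_le:
  assumes "\<forall>c'. cost c \<le> cost c'" "\<And>t. t \<in> {a<..<b} \<Longrightarrow> f t \<le> v"
  shows "c \<le> v"
proof (rule ccontr)
  assume "\<not> c \<le> v"
  then have "cost v < cost c"
    using assms(2) by (intro cost_less_if_closer) force
  then show False using assms(1) by (meson not_le)
qed

lemma cost_minimizer_ge:
  assumes "\<forall>c'. cost c \<le> cost c'" "\<And>t. t \<in> {a<..<b} \<Longrightarrow> v \<le> f t"
  shows "v \<le> c"
proof (rule ccontr)
  assume "\<not> v \<le> c"
  then have "cost v < cost c"
    using assms(2) by (intro cost_less_if_closer) force
  then show False using assms(1) by (meson not_le)
qed

lemma tau_r_eq_iff_minimizer:
  assumes r: "r > 1"
  shows "c = tau_r r f {a..b} \<longleftrightarrow> (\<forall>c'. cost c \<le> cost c')"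
proof -
  have "Lr_dist_const r f {a..b} c = cost c powr (1 / r)" for c
  proof -
    have "set_borel_measurable lborel {a<..<b} (\<lambda>t. \<bar>f t - c\<bar> powr r)"
      using integrable[of c] unfolding set_integrable_def set_borel_measurable_def by auto
    then show ?thesis
      unfolding Lr_dist_const_def Lr_cost_def using set_integral_Icc_eq_Ioo[OF less] by simp
  qed
  then have dist_le_iff: "Lr_dist_const r f {a..b} c \<le> Lr_dist_const r f {a..b} c' \<longleftrightarrow> cost c \<le> cost c'"
    for c c'
    using powr_le_powr_iff_base[OF Lr_cost_nonneg Lr_cost_nonneg, of "1 / r"] r by simp
  obtain c0 where c0: "\<forall>c'. cost c0 \<le> cost c'" using cost_has_minimizer by blast
  then have min_iff: "(\<forall>c'. cost c \<le> cost c') \<longleftrightarrow> c = c0" for c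
    using cost_minimizer_unique[OF r _ c0] by blast
  then show ?thesis
    unfolding tau_r_def dist_le_iff by simp
qed

end

section \<open>Minimisers of the \<open>L\<^sup>1\<close> cost are medians\<close>

lemma L1_cost_diff:
  assumes "\<And>c. set_integrable lborel {a<..<b} (\<lambda>t. \<bar>f t - c\<bar>)"
  shows "Lr_cost 1 f a b c' - Lr_cost 1 f a b c = (LINT t:{a<..<b}|lborel. \<bar>f t - c'\<bar> - \<bar>f t - c\<bar>)"
  unfolding Lr_cost_def by (simp add: set_integral_diff(2)[OF assms assms])

text \<open>If \<open>f\<close> crosses the level \<open>c\<close> at the midpoint \<open>s\<close> of the cell, then moving the constant
  from \<open>c\<close> to \<open>c'\<close> changes the integrand by \<open>\<ge> c' - c\<close> before \<open>s\<close> and by \<open>\<ge> c - c'\<close> after it,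
  and these contributions balance.\<close>
lemma L1_cost_minimal_if_crossing:
  assumes int: "\<And>c. set_integrable lborel {a<..<b} (\<lambda>t. \<bar>f t - c\<bar>)" and ab: "a < b"
    and below: "\<And>t. t \<in> {a<..<b} \<Longrightarrow> t < (a + b) / 2 \<Longrightarrow> f t \<le> c"
    and above: "\<And>t. t \<in> {a<..<b} \<Longrightarrow> (a + b) / 2 \<le> t \<Longrightarrow> c \<le> f t"
  shows "Lr_cost 1 f a b c \<le> Lr_cost 1 f a b c'"
proof -
  let ?s = "(a + b) / 2"
  have "(c' - c) * (2 * ?s - a - b) \<le> (LINT t:{a<..<b}|lborel. \<bar>f t - c'\<bar> - \<bar>f t - c\<bar>)"
  proof (rule set_integral_ge_step)
    show "set_integrable lborel {a<..<b} (\<lambda>t. \<bar>f t - c'\<bar> - \<bar>f t - c\<bar>)"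
      by (intro set_integral_diff(1) int)
    fix t assume "t \<in> {a<..<b}"
    then show "(if t < ?s then c' - c else - (c' - c)) \<le> \<bar>f t - c'\<bar> - \<bar>f t - c\<bar>"
      using below[of t] above[of t] by (auto simp: abs_if)
  qed (use ab in auto)
  then show ?thesis using L1_cost_diff[OF int, of c' c] by (simp add: field_simps)
qed

context real_distribution
begin

text \<open>If \<open>F(c) < s\<close>, right continuity gives \<open>c' > c\<close> with \<open>F(c') < s\<close>. Replacing \<open>c\<close> by \<open>c'\<close>
  costs at most \<open>c' - c\<close> on \<open>]a, F(c')[\<close> and gains exactly \<open>c' - c\<close> on \<open>[F(c'), b[\<close>, where
  \<open>F\<^sup>-\<^sup>1 \<ge> c'\<close>; since \<open>F(c')\<close> lies left of the midpoint the gain wins.\<close>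
lemma L1_cost_minimizer_le_cdf:
  assumes ab: "0 \<le> a" "a < b" "b \<le> 1"
    and int: "\<And>c. set_integrable lborel {a<..<b} (\<lambda>t. \<bar>quantile M t - c\<bar>)"
    and min: "\<forall>c'. Lr_cost 1 (quantile M) a b c \<le> Lr_cost 1 (quantile M) a b c'"
  shows "(a + b) / 2 \<le> Defs.cdf M c"
proof (rule ccontr)
  assume "\<not> ?thesis"
  then obtain c' where c': "c < c'" "Defs.cdf M c' < (a + b) / 2"
    using cdf_less_right by (metis not_le)
  define w where "w = max (Defs.cdf M c') a"
  have w: "a \<le> w" "w \<le> b" "2 * w < a + b" using c' ab unfolding w_def by auto
  have "(LINT t:{a<..<b}|lborel. \<bar>quantile M t - c'\<bar> - \<bar>quantile M t - c\<bar>) \<le> (c' - c) * (2 * w - a - b)"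
  proof (rule set_integral_le_step)
    show "set_integrable lborel {a<..<b} (\<lambda>t. \<bar>quantile M t - c'\<bar> - \<bar>quantile M t - c\<bar>)"
      by (intro set_integral_diff(1) int)
    fix t assume t: "t \<in> {a<..<b}"
    have "c' \<le> quantile M t" if "w \<le> t"
    proof (rule le_quantile_if_cdf_le)
      show "t < 1" using t ab by auto
      fix x assume "x < c'"
      then show "Defs.cdf M x \<le> t" using cdf_mono[of x c'] that by (simp add: w_def)
    qed
    then show "\<bar>quantile M t - c'\<bar> - \<bar>quantile M t - c\<bar> \<le> (if t < w then c' - c else - (c' - c))"
      using c' by auto
  qed (use w in auto)
  also have "\<dots> < 0" using c' w by (intro mult_pos_neg) auto
  finally show False using min[rule_format, of c'] L1_cost_diff[OF int, of c' c] by linarith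
qed

lemma L1_cost_minimizer_cdf_le:
  assumes ab: "0 \<le> a" "a < b" "b \<le> 1"
    and int: "\<And>c. set_integrable lborel {a<..<b} (\<lambda>t. \<bar>quantile M t - c\<bar>)"
    and min: "\<forall>c'. Lr_cost 1 (quantile M) a b c \<le> Lr_cost 1 (quantile M) a b c'"
    and x: "x < c"
  shows "Defs.cdf M x \<le> (a + b) / 2"
proof (rule ccontr)
  assume F: "\<not> Defs.cdf M x \<le> (a + b) / 2"
  define c' where "c' = (x + c) / 2"
  have c': "c' < c" "(a + b) / 2 < Defs.cdf M c'"
    using x F cdf_mono[of x c'] unfolding c'_def by auto
  define w where "w = min (Defs.cdf M c') b"
  have w: "a \<le> w" "w \<le> b" "a + b < 2 * w" using c' ab unfolding w_def by auto
  have "(LINT t:{a<..<b}|lborel. \<bar>quantile M t - c'\<bar> - \<bar>quantile M t - c\<bar>) \<le> (c' - c) * (2 * w - a - b)"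
  proof (rule set_integral_le_step)
    show "set_integrable lborel {a<..<b} (\<lambda>t. \<bar>quantile M t - c'\<bar> - \<bar>quantile M t - c\<bar>)"
      by (intro set_integral_diff(1) int)
    fix t assume t: "t \<in> {a<..<b}"
    have "quantile M t \<le> c'" if "t < w"
      using t ab that by (intro quantile_le_if_less_cdf) (auto simp: w_def)
    then show "\<bar>quantile M t - c'\<bar> - \<bar>quantile M t - c\<bar> \<le> (if t < w then c' - c else - (c' - c))"
      using c' by auto
  qed (use w in auto)
  also have "\<dots> < 0" using c' w by (intro mult_neg_pos) auto
  finally show False using min[rule_format, of c'] L1_cost_diff[OF int, of c' c] by linarith
qed

lemma L1_cost_minimizer_iff_mem_Q_set:
  assumes ab: "0 \<le> a" "a < b" "b \<le> 1"
    and int: "\<And>c. set_integrable lborel {a<..<b} (\<lambda>t. \<bar>quantile M t - c\<bar>)"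
  shows "(\<forall>c'. Lr_cost 1 (quantile M) a b c \<le> Lr_cost 1 (quantile M) a b c') \<longleftrightarrow>
    c \<in> Q_set M ((a + b) / 2)"
proof -
  have s: "0 < (a + b) / 2" "(a + b) / 2 < 1" using ab by auto
  show ?thesis
    unfolding mem_Q_set_iff[OF s]
  proof safe
    fix c' assume Q: "(a + b) / 2 \<le> Defs.cdf M c" "\<forall>x<c. Defs.cdf M x \<le> (a + b) / 2"
    show "Lr_cost 1 (quantile M) a b c \<le> Lr_cost 1 (quantile M) a b c'"
    proof (rule L1_cost_minimal_if_crossing[OF int ab(2)])
      fix t assume "t \<in> {a<..<b}"
      then show "t < (a + b) / 2 \<Longrightarrow> quantile M t \<le> c"
        and "(a + b) / 2 \<le> t \<Longrightarrow> c \<le> quantile M t"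
        using ab Q by (auto intro!: quantile_le_if_less_cdf le_quantile_if_cdf_le)
    qed
  qed (use L1_cost_minimizer_le_cdf[OF ab int] L1_cost_minimizer_cdf_le[OF ab int] in auto)
qed

end

section \<open>Minimising a separable cost over \<open>\<Xi>\<^sub>n\<close>\<close>

lemma exists_Xi_n_extension:
  fixes c :: "nat \<Rightarrow> real"
  assumes S: "S \<subseteq> {1..n}" and mono: "\<And>i j. i \<in> S \<Longrightarrow> j \<in> S \<Longrightarrow> i \<le> j \<Longrightarrow> c i \<le> c j"
  shows "\<exists>x\<in>Xi_n n. \<forall>i\<in>S. x i = c i"
proof (cases "S = {}")
  case True
  then show ?thesis by (intro bexI[of _ "\<lambda>_. 0"]) (auto simp: Xi_n_def)
next
  case False
  have fin: "finite S" using S finite_subset by blast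
  text \<open>Extend \<open>c\<close> to the left by its value at \<open>min S\<close> and take running maxima.\<close>
  define x where "x i = Max (insert (c (Min S)) (c ` {j\<in>S. j \<le> i}))" for i
  have fin': "finite (insert (c (Min S)) (c ` {j\<in>S. j \<le> i}))" for i using fin by auto
  have "x \<in> Xi_n n"
    unfolding Xi_n_def x_def by (auto intro!: Max_mono fin')
  moreover have "x i = c i" if i: "i \<in> S" for i
    unfolding x_def
  proof (rule Max_eqI[OF fin'])
    have "Min S \<in> S" "Min S \<le> i" using fin False i by auto
    then show "y \<le> c i" if "y \<in> insert (c (Min S)) (c ` {j\<in>S. j \<le> i})" for y
      using that i mono by auto
  qed (use i in auto)
  ultimately show ?thesis by blast
qed

lemma Xi_n_sum_minimizer_iff:
  fixes L :: "nat \<Rightarrow> real \<Rightarrow> real"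
  assumes xs: "xs \<in> Xi_n n" and xs_min: "\<And>i c. i \<in> {1..n} \<Longrightarrow> L i (xs i) \<le> L i c"
  shows "(\<forall>y\<in>Xi_n n. (\<Sum>i=1..n. L i (x i)) \<le> (\<Sum>i=1..n. L i (y i))) \<longleftrightarrow>
    (\<forall>i\<in>{1..n}. \<forall>c. L i (x i) \<le> L i c)"
proof
  assume x: "\<forall>y\<in>Xi_n n. (\<Sum>i=1..n. L i (x i)) \<le> (\<Sum>i=1..n. L i (y i))"
  show "\<forall>i\<in>{1..n}. \<forall>c. L i (x i) \<le> L i c"
  proof (intro ballI allI, rule ccontr)
    fix i c assume i: "i \<in> {1..n}" and "\<not> L i (x i) \<le> L i c"
    then have "L i (xs i) < L i (x i)" using xs_min[OF i, of c] by simp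
    then have "(\<Sum>j=1..n. L j (xs j)) < (\<Sum>j=1..n. L j (x j))"
      using i xs_min by (intro sum_strict_mono_ex1) auto
    then show False using x xs by (meson not_le)
  qed
qed (auto intro: sum_mono)

lemma Psum_cell_unique:
  assumes p: "p \<in> Pi_n n" and i: "i \<in> {1..n}" and j: "j \<in> {1..n}"
    and "Psum p (i - 1) < t" "t < Psum p i" "Psum p (j - 1) < t" "t < Psum p j"
  shows "i = j"
proof (cases i j rule: linorder_cases)
  case less
  then have "Psum p i \<le> Psum p (j - 1)" using j by (intro Psum_mono[OF p]) auto
  then show ?thesis using assms by simp
next
  case greater
  then have "Psum p j \<le> Psum p (i - 1)" using i by (intro Psum_mono[OF p]) auto
  then show ?thesis using assms by simp
qed

lemma Psum_cell_exists:
  assumes p: "p \<in> Pi_n n" and t: "0 < t" "t < 1" "t \<notin> Psum p ` {0..n}"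
  obtains i where "i \<in> {1..n}" "Psum p (i - 1) < t" "t < Psum p i"
proof -
  have ex: "t < Psum p n" using p t by (simp add: Psum_def Pi_n_def)
  define i where "i = (LEAST i. t < Psum p i)"
  have "t < Psum p i" unfolding i_def by (rule LeastI[of "\<lambda>i. t < Psum p i", OF ex])
  moreover have "i \<le> n" unfolding i_def by (rule Least_le[of "\<lambda>i. t < Psum p i", OF ex])
  moreover have "i \<noteq> 0" using calculation t by (auto simp: Psum_def)
  moreover have "\<not> t < Psum p (i - 1)"
    unfolding i_def by (rule not_less_Least) (use \<open>i \<noteq> 0\<close> in \<open>simp add: i_def\<close>)
  moreover have "t \<noteq> Psum p (i - 1)" using t(3) \<open>i \<le> n\<close> by auto
  ultimately show thesis using that[of i] by auto
qed

section \<open>Optimal approximation by \<open>\<delta>^p_x\<close>\<close>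

locale weighted_quantization =
  fixes r :: real and M :: "real measure" and n :: nat and p :: "nat \<Rightarrow> real"
  assumes one_le_r: "1 \<le> r" and M: "M \<in> prob_measures_r r" and p: "p \<in> Pi_n n"
begin

sublocale real_distribution M
  using M by (simp add: prob_measures_r_def prob_measures_real_distribution)

lemma integrable_moment: "integrable M (\<lambda>x. \<bar>x\<bar> powr r)"
  using M by (simp add: prob_measures_r_def)

definition cell_cost :: "nat \<Rightarrow> real \<Rightarrow> real" where
  "cell_cost i = Lr_cost r (quantile M) (Psum p (i - 1)) (Psum p i)"

lemma set_integrable_cell:
  assumes "i \<in> {1..n}"
  shows "set_integrable lborel {Psum p (i - 1)<..<Psum p i} (\<lambda>t. \<bar>quantile M t - c\<bar> powr r)"
  using Psum_bounds[OF p assms] one_le_r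
  by (intro set_integrable_subset[OF set_integrable_abs_quantile_diff_powr[OF integrable_moment]]) auto

lemma monotone_Lr_cost_cell:
  assumes "i \<in> {1..n}" "Psum p (i - 1) < Psum p i"
  shows "monotone_Lr_cost r (quantile M) (Psum p (i - 1)) (Psum p i)"
proof
  show "mono_on {Psum p (i - 1)<..<Psum p i} (quantile M)"
    using Psum_bounds[OF p assms(1)] by (intro mono_on_subset[OF mono_on_quantile]) auto
next
  show "\<And>c. set_integrable lborel {Psum p (i - 1)<..<Psum p i} (\<lambda>t. \<bar>quantile M t - c\<bar> powr r)"
    by (rule set_integrable_cell[OF assms(1)])
qed (use assms one_le_r in auto)

lemma integral_quantile_delta_px_eq_sum:
  assumes y: "y \<in> Xi_n n"
  shows "(LINT t:{0<..<1}|lborel. \<bar>quantile (delta_px n p y) t - quantile M t\<bar> powr r)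
       = (\<Sum>i=1..n. cell_cost i (y i))"
proof -
  let ?cell = "\<lambda>i. {Psum p (i - 1)<..<Psum p i}"
  let ?g = "\<lambda>i t. indicat_real (?cell i) t *\<^sub>R \<bar>quantile M t - y i\<bar> powr r"
  have sub: "?cell i \<subseteq> {0<..<1}" if "i \<in> {1..n}" for i
    using Psum_bounds[OF p that] by auto
  have int: "integrable lborel (?g i)" if "i \<in> {1..n}" for i
    using set_integrable_cell[OF that] by (simp add: set_integrable_def)
  interpret D: real_distribution "delta_px n p y"
    by (rule real_distribution_delta_px[OF p])
  have "(\<Sum>i=1..n. cell_cost i (y i)) = integral\<^sup>L lborel (\<lambda>t. \<Sum>i=1..n. ?g i t)"
    unfolding cell_cost_def Lr_cost_def set_lebesgue_integral_def
    by (subst Bochner_Integration.integral_sum) (use int in auto)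
  also have "\<dots> = (LINT t:{0<..<1}|lborel. \<bar>quantile (delta_px n p y) t - quantile M t\<bar> powr r)"
    unfolding set_lebesgue_integral_def
  proof (rule integral_cong_AE)
    show "(\<lambda>t. \<Sum>i=1..n. ?g i t) \<in> borel_measurable lborel"
      using int by (intro borel_measurable_sum) auto
    show "(\<lambda>t. indicat_real {0<..<1} t *\<^sub>R \<bar>quantile (delta_px n p y) t - quantile M t\<bar> powr r)
        \<in> borel_measurable lborel"
    proof -
      have "set_borel_measurable lborel {0<..<1} (\<lambda>t. \<bar>quantile (delta_px n p y) t - quantile M t\<bar> powr r)"
        using borel_measurable_quantile D.borel_measurable_quantile unfolding set_borel_measurable_def
        by (subst borel_measurable_restrict_space_iff[symmetric]) auto
      then show ?thesis unfolding set_borel_measurable_def .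
    qed
    have "AE t in lborel. t \<notin> Psum p ` {0..n}"
      by (intro AE_not_in countable_imp_null_set_lborel countable_finite) auto
    then show "AE t in lborel. (\<Sum>i=1..n. ?g i t)
        = indicat_real {0<..<1} t *\<^sub>R \<bar>quantile (delta_px n p y) t - quantile M t\<bar> powr r"
    proof eventually_elim
      case (elim t)
      show ?case
      proof (cases "t \<in> {0<..<1}")
        case False
        then have "t \<notin> ?cell i" if "i \<in> {1..n}" for i
          using sub[OF that] by blast
        then show ?thesis using False by simp
      next
        case True
        then obtain i where i: "i \<in> {1..n}" "Psum p (i - 1) < t" "t < Psum p i"
          using Psum_cell_exists[OF p _ _ elim] by auto
        have "?g j t = (if j = i then \<bar>quantile M t - y i\<bar> powr r else 0)" if "j \<in> {1..n}" for j
        proof (cases "j = i")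
          case False
          then have "t \<notin> ?cell j" using Psum_cell_unique[OF p i(1) that i(2,3)] by auto
          then show ?thesis using False by simp
        qed (use i in simp)
        then have "(\<Sum>j=1..n. ?g j t) = (\<Sum>j=1..n. if j = i then \<bar>quantile M t - y i\<bar> powr r else 0)"
          by (rule sum.cong[OF refl])
        also have "\<dots> = \<bar>quantile M t - y i\<bar> powr r"
          using i(1) by simp
        finally have "(\<Sum>j=1..n. ?g j t) = \<bar>quantile M t - y i\<bar> powr r" .
        then show ?thesis
          using True quantile_delta_px[OF p y i] abs_minus_commute[of "y i" "quantile M t"] by simp
      qed
    qed
  qed
  finally show ?thesis ..
qed

lemma is_minimizer_iff_sum_cell_cost:
  "is_minimizer r M n p x \<longleftrightarrow>
    x \<in> Xi_n n \<and> (\<forall>y\<in>Xi_n n. (\<Sum>i=1..n. cell_cost i (x i)) \<le> (\<Sum>i=1..n. cell_cost i (y i)))"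
proof -
  have "d_r r (delta_px n p y) M = (\<Sum>i=1..n. cell_cost i (y i)) powr (1 / r)" if "y \<in> Xi_n n" for y
    unfolding d_r_def using integral_quantile_delta_px_eq_sum[OF that] by simp
  moreover have "0 \<le> (\<Sum>i=1..n. cell_cost i (y i))" for y
    unfolding cell_cost_def by (intro sum_nonneg Lr_cost_nonneg)
  ultimately show ?thesis
    unfolding is_minimizer_def using one_le_r by (auto simp: powr_le_powr_iff_base)
qed

text \<open>Cell minimisers are automatically ordered: both are separated by the value of
  \<open>F\<^sup>-\<^sup>1\<close> at the common boundary \<open>P\<^sub>i \<le> P\<^sub>j\<^sub>-\<^sub>1\<close>.\<close>
lemma cell_minimizers_mono:
  assumes i: "i \<in> {1..n}" "Psum p (i - 1) < Psum p i" and j: "j \<in> {1..n}" "Psum p (j - 1) < Psum p j"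
    and "i < j" and c: "\<forall>c'. cell_cost i c \<le> cell_cost i c'" and d: "\<forall>c'. cell_cost j d \<le> cell_cost j c'"
  shows "c \<le> d"
proof -
  interpret I: monotone_Lr_cost r "quantile M" "Psum p (i - 1)" "Psum p i"
    by (rule monotone_Lr_cost_cell[OF i])
  interpret J: monotone_Lr_cost r "quantile M" "Psum p (j - 1)" "Psum p j"
    by (rule monotone_Lr_cost_cell[OF j])
  have mid: "Psum p i \<le> Psum p (j - 1)" using \<open>i < j\<close> j by (intro Psum_mono[OF p]) auto
  have v: "0 < Psum p i" "Psum p i < 1"
    using Psum_bounds[OF p i(1)] Psum_bounds[OF p j(1)] i j mid by auto
  have "c \<le> quantile M (Psum p i)"
  proof (rule I.cost_minimizer_le)
    show "\<forall>c'. I.cost c \<le> I.cost c'" using c by (simp add: cell_cost_def)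
    fix t assume "t \<in> {Psum p (i - 1)<..<Psum p i}"
    then show "quantile M t \<le> quantile M (Psum p i)"
      using Psum_bounds[OF p i(1)] v by (intro quantile_mono) auto
  qed
  also have "\<dots> \<le> d"
  proof (rule J.cost_minimizer_ge)
    show "\<forall>c'. J.cost d \<le> J.cost c'" using d by (simp add: cell_cost_def)
    fix t assume "t \<in> {Psum p (j - 1)<..<Psum p j}"
    then show "quantile M (Psum p i) \<le> quantile M t"
      using Psum_bounds[OF p j(1)] v mid by (intro quantile_mono) auto
  qed
  finally show ?thesis .
qed

lemma cell_cost_degenerate: "\<not> Psum p (i - 1) < Psum p i \<Longrightarrow> cell_cost i c = 0"
  unfolding cell_cost_def by (simp add: Lr_cost_degenerate)

lemma exists_cellwise_minimal:
  "\<exists>xs\<in>Xi_n n. \<forall>i\<in>{1..n}. \<forall>c. cell_cost i (xs i) \<le> cell_cost i c"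
proof -
  define S where "S = {i\<in>{1..n}. Psum p (i - 1) < Psum p i}"
  have "\<forall>i\<in>S. \<exists>c. \<forall>c'. cell_cost i c \<le> cell_cost i c'"
  proof
    fix i assume "i \<in> S"
    then interpret monotone_Lr_cost r "quantile M" "Psum p (i - 1)" "Psum p i"
      unfolding S_def by (intro monotone_Lr_cost_cell) auto
    show "\<exists>c. \<forall>c'. cell_cost i c \<le> cell_cost i c'"
      unfolding cell_cost_def by (rule cost_has_minimizer)
  qed
  then obtain c where c: "\<forall>i\<in>S. \<forall>c'. cell_cost i (c i) \<le> cell_cost i c'"
    by (rule bchoice[elim_format]) blast
  have "c i \<le> c j" if "i \<in> S" "j \<in> S" "i \<le> j" for i j
  proof (cases "i = j")
    case False
    then show ?thesis
      using that c by (intro cell_minimizers_mono[of i j "c i" "c j"]) (auto simp: S_def)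
  qed simp
  moreover have "S \<subseteq> {1..n}" unfolding S_def by blast
  ultimately obtain xs where xs: "xs \<in> Xi_n n" "\<forall>i\<in>S. xs i = c i"
    using exists_Xi_n_extension by blast
  have "cell_cost i (xs i) \<le> cell_cost i c'" if "i \<in> {1..n}" for i c'
  proof (cases "i \<in> S")
    case False
    then show ?thesis using that by (simp add: S_def cell_cost_degenerate)
  qed (use xs(2) c in simp)
  with xs(1) show ?thesis by blast
qed

lemma minimizer_iff_cellwise_minimal:
  shows "\<exists>x. is_minimizer r M n p x"
    and "x \<in> Xi_n n \<Longrightarrow> is_minimizer r M n p x \<longleftrightarrow>
      (\<forall>i\<in>{1..n}. Psum p (i - 1) < Psum p i \<longrightarrow> (\<forall>c. cell_cost i (x i) \<le> cell_cost i c))"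
proof -
  obtain xs where xs: "xs \<in> Xi_n n" "\<And>i c. i \<in> {1..n} \<Longrightarrow> cell_cost i (xs i) \<le> cell_cost i c"
    using exists_cellwise_minimal by blast
  have degenerate: "cell_cost i c \<le> cell_cost i c'" if "\<not> Psum p (i - 1) < Psum p i" for i c c'
    using that by (simp add: cell_cost_degenerate)
  have iff: "is_minimizer r M n p x \<longleftrightarrow> x \<in> Xi_n n \<and> (\<forall>i\<in>{1..n}. \<forall>c. cell_cost i (x i) \<le> cell_cost i c)"
    for x
    using Xi_n_sum_minimizer_iff[where L = cell_cost and x = x, OF xs]
    unfolding is_minimizer_iff_sum_cell_cost by blast
  show "\<exists>x. is_minimizer r M n p x"
    using xs iff by blast
  show "x \<in> Xi_n n \<Longrightarrow> is_minimizer r M n p x \<longleftrightarrow>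
      (\<forall>i\<in>{1..n}. Psum p (i - 1) < Psum p i \<longrightarrow> (\<forall>c. cell_cost i (x i) \<le> cell_cost i c))"
    using iff degenerate by blast
qed

lemma cell_minimal_iff_mem_Q_set:
  assumes "r = 1" "i \<in> {1..n}" "Psum p (i - 1) < Psum p i"
  shows "(\<forall>c'. cell_cost i c \<le> cell_cost i c') \<longleftrightarrow> c \<in> Q_set M ((Psum p (i - 1) + Psum p i) / 2)"
proof -
  have "set_integrable lborel {Psum p (i - 1)<..<Psum p i} (\<lambda>t. \<bar>quantile M t - c\<bar>)" for c
    using set_integrable_cell[OF assms(2), of c] assms(1) by simp
  then show ?thesis
    unfolding cell_cost_def
    using L1_cost_minimizer_iff_mem_Q_set[OF _ assms(3)] Psum_bounds[OF p assms(2)] assms(1) by simp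
qed

lemma cell_minimal_iff_eq_tau_r:
  assumes "r > 1" "i \<in> {1..n}" "Psum p (i - 1) < Psum p i"
  shows "(\<forall>c'. cell_cost i c \<le> cell_cost i c') \<longleftrightarrow> c = tau_r r (quantile M) {Psum p (i - 1) .. Psum p i}"
proof -
  interpret monotone_Lr_cost r "quantile M" "Psum p (i - 1)" "Psum p i"
    by (rule monotone_Lr_cost_cell[OF assms(2,3)])
  show ?thesis unfolding cell_cost_def using tau_r_eq_iff_minimizer[OF assms(1)] by simp
qed

end

theorem theorem5p4:
  fixes r :: real and M :: "real measure" and n :: nat and p :: "nat \<Rightarrow> real"
  assumes "r \<ge> 1" and "M \<in> prob_measures_r r" and "p \<in> Pi_n n"
  shows "(\<exists>x. is_minimizer r M n p x)
    \<and> (r = 1 \<longrightarrow> (\<forall>x\<in>Xi_n n. is_minimizer r M n p x \<longleftrightarrow>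
          (\<forall>i\<in>{1..n}. Psum p (i - 1) < Psum p i \<longrightarrow>
             x i \<in> Q_set M ((Psum p (i - 1) + Psum p i) / 2))))
    \<and> (r > 1 \<longrightarrow> (\<forall>x\<in>Xi_n n. is_minimizer r M n p x \<longleftrightarrow>
          (\<forall>i\<in>{1..n}. Psum p (i - 1) < Psum p i \<longrightarrow>
             x i = tau_r r (quantile M) {Psum p (i - 1) .. Psum p i})))"
proof -
  interpret weighted_quantization r M n p
    using assms by unfold_locales
  note cellwise = minimizer_iff_cellwise_minimal(2)
  show ?thesis
  proof (intro conjI impI ballI)
    show "\<exists>x. is_minimizer r M n p x" by (rule minimizer_iff_cellwise_minimal(1))
  next
    fix x assume "r = 1" "x \<in> Xi_n n"
    then show "is_minimizer r M n p x \<longleftrightarrow> (\<forall>i\<in>{1..n}. Psum p (i - 1) < Psum p i \<longrightarrow>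
        x i \<in> Q_set M ((Psum p (i - 1) + Psum p i) / 2))"
      using cellwise cell_minimal_iff_mem_Q_set by simp
  next
    fix x assume "r > 1" "x \<in> Xi_n n"
    then show "is_minimizer r M n p x \<longleftrightarrow> (\<forall>i\<in>{1..n}. Psum p (i - 1) < Psum p i \<longrightarrow>
        x i = tau_r r (quantile M) {Psum p (i - 1) .. Psum p i})"
      using cellwise cell_minimal_iff_eq_tau_r by simp
  qed
qed

end
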